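(* Let $n_r, n_d \ge 0$ and $n_c \ge 1$ be integers, let $m_1,\dots,m_{n_c}$ be positive integers, and set $\hat{m}_0=0$, $\hat{m}_h=\sum_{j=1}^h m_j$, and $n = n_r+n_d+\hat{m}_{n_c}$. Let $x^1,\dots,x^k\in\mathbb{R}^n$ be points satisfying, for every $i=1,\dots,k$ and every $h=1,\dots,n_c$, $x^i_{n_r+n_d+j}\in\{0,1\}$ for $j=\hat{m}_{h-1}+1,\dots,\hat{m}_h$ and $\sum_{j=\hat{m}_{h-1}+1}^{\hat{m}_h} x^i_{n_r+n_d+j} = 1$. Let $\phi:\mathbb{R}_+\to\mathbb{R}$ be any function, $\Phi = (\phi(\|x^i-x^j\|))_{i,j=1,\dots,k}$ (Euclidean norm), let $F\in\mathbb{R}^k$, and let $P$ be the $k\times(n+1)$ matrix whose $i$-th row is $((x^i)^\top, 1)$. Let $\hat{P}$ be the $k\times(n+1-n_c)$ matrix obtained from $P$ by deleting the columns corresponding to the coordinates $x_{n_r+n_d+\hat{m}_h}$ for $h=1,\dots,n_c$. If the system $$\begin{pmatrix}\Phi & P\\ P^\top & 0_{(n+1)\times(n+1)}\end{pmatrix}\begin{pmatrix}\lambda\\ \alpha\end{pmatrix} = \begin{pmatrix}F\\ 0_{n+1}\end{pmatrix}$$ has a solution $(\lambda,\alpha)\in\mathbb{R}^k\times\mathbb{R}^{n+1}$, then the system $$\begin{pmatrix}\Phi & \hat{P}\\ \hat{P}^\top & 0_{(n+1-n_c)\times(n+1-n_c)}\end{pmatrix}\begin{pmatrix}\lambda\\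 \alpha\end{pmatrix} = \begin{pmatrix}F\\ 0_{n+1-n_c}\end{pmatrix}$$ has a solution $(\lambda,\alpha)\in\mathbb{R}^k\times\mathbb{R}^{n+1-n_c}$.
   Context: This is the setting of radial basis function interpolation with a polynomial tail of degree $d=1$ (e.g. cubic $\phi(r)=r^3$ or thin plate spline $\phi(r)=r^2\log r$), where the interpolant is $s(x)=\sum_i\lambda_i\phi(\|x-x^i\|)+\alpha^\top(x,1)$ and $F$ is the vector of function values at the interpolation points. The last $\hat{m}_{n_c}$ coordinates are the unary (one-hot) encodings of $n_c$ categorical variables, the $h$-th having $m_h$ possible values. *)

theory Defs
  imports Complex_Main
begin

text \<open>Vectors in R^n are represented as functions nat => real, meaningful on indices 1..n;
  a family of k points is x :: nat => nat => real, point i in 1..k, coordinate j in 1..n.\<close>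

definition mhat :: "(nat \<Rightarrow> nat) \<Rightarrow> nat \<Rightarrow> nat" where
  "mhat m h = (\<Sum>j=1..h. m j)"

definition eucl_dist :: "nat \<Rightarrow> (nat \<Rightarrow> real) \<Rightarrow> (nat \<Rightarrow> real) \<Rightarrow> real" where
  "eucl_dist n a b = sqrt (\<Sum>j=1..n. (a j - b j)^2)"

definition Pmat :: "nat \<Rightarrow> (nat \<Rightarrow> nat \<Rightarrow> real) \<Rightarrow> nat \<Rightarrow> nat \<Rightarrow> real" where
  "Pmat n x i c = (if c = n + 1 then 1 else x i c)"

text \<open>Solvability of the saddle-point system
  [Phi Q; Q^T 0] (lambda, alpha) = (F, 0), where Q is the submatrix of P formed by the
  columns with indices in the set C (rows 1..k); alpha is indexed by C.\<close>
definition saddle_solvable ::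
  "nat \<Rightarrow> (nat \<Rightarrow> nat \<Rightarrow> real) \<Rightarrow> (nat \<Rightarrow> nat \<Rightarrow> real) \<Rightarrow> nat set \<Rightarrow> (nat \<Rightarrow> real) \<Rightarrow> bool" where
  "saddle_solvable k Phi P C F \<longleftrightarrow>
     (\<exists>lam alpha :: nat \<Rightarrow> real.
        (\<forall>i\<in>{1..k}. (\<Sum>l=1..k. Phi i l * lam l) + (\<Sum>c\<in>C. P i c * alpha c) = F i) \<and>
        (\<forall>c\<in>C. (\<Sum>i=1..k. P i c * lam i) = 0))"

end

theory Submission
  imports Defs
begin

text \<open>Within each categorical block the one-hot coordinates of every point sum to 1, so the
  column of P belonging to the last coordinate of the block is the constant column minus the
  other columns of that block.
  Deleting columns that are linear combinations of retained columns preserves solvability of a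
  saddle-point system: \<lambda> is kept, the coefficient of each deleted column is redistributed
  onto the retained columns according to the combination, which leaves P \<alpha> unchanged, and
  the constraints P^T \<lambda> = 0 for the retained columns are among the old ones.\<close>

lemma saddle_solvable_drop_dependent_columns:
  fixes P :: "nat \<Rightarrow> nat \<Rightarrow> real"
  assumes "finite C" and "D \<subseteq> C"
    and dependent: "\<forall>d\<in>D. \<exists>w. \<forall>i\<in>{1..k}. P i d = (\<Sum>c\<in>C - D. P i c * w c)"
    and "saddle_solvable k Phi P C F"
  shows "saddle_solvable k Phi P (C - D) F"
proof -
  obtain lam alpha where
    rows: "\<forall>i\<in>{1..k}. (\<Sum>l=1..k. Phi i l * lam l) + (\<Sum>c\<in>C. P i c * alpha c) = F i" and
    cols: "\<forall>c\<in>C. (\<Sum>i=1..k. P i c * lam i) = 0"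
    using assms(4) unfolding saddle_solvable_def by blast
  obtain w where w: "\<forall>d\<in>D. \<forall>i\<in>{1..k}. P i d = (\<Sum>c\<in>C - D. P i c * w d c)"
    using bchoice[OF dependent] by blast
  define alpha' where "alpha' c = alpha c + (\<Sum>d\<in>D. alpha d * w d c)" for c
  have kept_rows: "(\<Sum>c\<in>C - D. P i c * alpha' c) = (\<Sum>c\<in>C. P i c * alpha c)"
    if "i \<in> {1..k}" for i
  proof -
    have "(\<Sum>c\<in>C - D. P i c * alpha' c)
        = (\<Sum>c\<in>C - D. P i c * alpha c) + (\<Sum>d\<in>D. alpha d * (\<Sum>c\<in>C - D. P i c * w d c))"
      unfolding alpha'_def
      by (simp add: distrib_left sum.distrib sum_distrib_left sum.swap[of _ "C - D"] ac_simps)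
    also have "(\<Sum>d\<in>D. alpha d * (\<Sum>c\<in>C - D. P i c * w d c)) = (\<Sum>d\<in>D. P i d * alpha d)"
      using w that by (auto intro: sum.cong)
    also have "(\<Sum>c\<in>C - D. P i c * alpha c) + \<dots> = (\<Sum>c\<in>C. P i c * alpha c)"
      using assms(1,2) by (metis sum.subset_diff)
    finally show ?thesis .
  qed
  have "\<forall>i\<in>{1..k}. (\<Sum>l=1..k. Phi i l * lam l) + (\<Sum>c\<in>C - D. P i c * alpha' c) = F i"
    using rows kept_rows by simp
  moreover have "\<forall>c\<in>C - D. (\<Sum>i=1..k. P i c * lam i) = 0"
    using cols by simp
  ultimately show ?thesis
    unfolding saddle_solvable_def by blast
qed

lemma Pmat_column_dependent:
  assumes "finite C" and "d \<le> n" and "B \<subseteq> {1..n}" and "insert (n + 1) B \<subseteq> C"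
    and "\<forall>i\<in>I. x i d = 1 - (\<Sum>c\<in>B. x i c)"
  shows "\<exists>w. \<forall>i\<in>I. Pmat n x i d = (\<Sum>c\<in>C. Pmat n x i c * w c)"
proof -
  define w where "w c = (if c = n + 1 then 1 else if c \<in> B then -1 else 0 :: real)" for c
  have "Pmat n x i d = (\<Sum>c\<in>C. Pmat n x i c * w c)" if "i \<in> I" for i
  proof -
    have "n + 1 \<notin> B" "finite B" using assms(3) finite_subset by auto
    have "Pmat n x i d = 1 + (\<Sum>c\<in>B. - x i c)"
      using assms(2,5) that by (simp add: Pmat_def sum_negf)
    also have "\<dots> = Pmat n x i (n + 1) * w (n + 1) + (\<Sum>c\<in>B. Pmat n x i c * w c)"
      using \<open>n + 1 \<notin> B\<close> by (auto simp: w_def Pmat_def intro: sum.cong)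
    also have "\<dots> = (\<Sum>c\<in>insert (n + 1) B. Pmat n x i c * w c)"
      using \<open>n + 1 \<notin> B\<close> \<open>finite B\<close> by simp
    also have "\<dots> = (\<Sum>c\<in>C. Pmat n x i c * w c)"
      using assms(1,4) by (intro sum.mono_neutral_left) (auto simp: w_def)
    finally show ?thesis .
  qed
  then show ?thesis by blast
qed

lemma mhat_Suc: "mhat m (Suc h) = mhat m h + m (Suc h)"
  unfolding mhat_def by simp

lemma mhat_mono: "h \<le> h' \<Longrightarrow> mhat m h \<le> mhat m h'"
  unfolding mhat_def by (rule sum_mono2) auto

lemma mhat_pred_less: "h \<ge> 1 \<Longrightarrow> m h > 0 \<Longrightarrow> mhat m (h - 1) < mhat m h"
  using mhat_Suc[of m "h - 1"] by simp

lemma mhat_notin_block: "mhat m h' \<notin> {mhat m (h - 1)<..<mhat m h}"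
proof (cases "h' < h")
  case True
  then have "h' \<le> h - 1" by simp
  then show ?thesis using mhat_mono[of h' "h - 1" m] by auto
next
  case False
  then show ?thesis using mhat_mono[of h h' m] by auto
qed

lemma sum_block_last:
  fixes f :: "nat \<Rightarrow> real"
  assumes "lo < hi" and "(\<Sum>j=lo + 1..hi. f (a + j)) = 1"
  shows "f (a + hi) = 1 - (\<Sum>c\<in>{a + lo<..<a + hi}. f c)"
proof -
  have "(\<Sum>j=lo + 1..hi. f (a + j)) = (\<Sum>c=a + lo + 1..a + hi. f c)"
    using sum.shift_bounds_cl_nat_ivl[of f "lo + 1" a hi] by (simp add: ac_simps)
  also have "\<dots> = f (a + hi) + (\<Sum>c\<in>{a + lo<..<a + hi}. f c)"
  proof -
    have "{a + lo + 1..a + hi} = insert (a + hi) {a + lo<..<a + hi}"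
      using assms(1) by auto
    then show ?thesis by simp
  qed
  finally show ?thesis using assms(2) by simp
qed

lemma onehot_last_column_dependent:
  fixes x :: "nat \<Rightarrow> nat \<Rightarrow> real"
  assumes h: "h \<in> {1..nc}" and "m h > 0" and "a + mhat m nc \<le> n"
    and onehot: "\<forall>i\<in>I. (\<Sum>j=mhat m (h - 1) + 1..mhat m h. x i (a + j)) = 1"
  defines "D \<equiv> {a + mhat m h' | h'. h' \<in> {1..nc}}"
  shows "\<exists>w. \<forall>i\<in>I. Pmat n x i (a + mhat m h) = (\<Sum>c\<in>{1..n + 1} - D. Pmat n x i c * w c)"
proof -
  define B where "B = {a + mhat m (h - 1)<..<a + mhat m h}"
  have D_le: "d \<le> n" if "d \<in> D" for d
    using that assms(3) unfolding D_def by (auto dest!: mhat_mono[of _ nc m])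
  have "a + mhat m h \<le> n" using D_le h unfolding D_def by blast
  have "B \<inter> D = {}"
    using mhat_notin_block[of m _ h] unfolding B_def D_def by auto
  moreover have "B \<subseteq> {1..n}" using \<open>a + mhat m h \<le> n\<close> unfolding B_def by auto
  moreover have "n + 1 \<notin> D" using D_le by fastforce
  ultimately have kept: "insert (n + 1) B \<subseteq> {1..n + 1} - D" by auto
  have "\<forall>i\<in>I. x i (a + mhat m h) = 1 - (\<Sum>c\<in>B. x i c)"
    using sum_block_last[OF mhat_pred_less] onehot h \<open>m h > 0\<close> unfolding B_def by simp
  from Pmat_column_dependent[OF _ \<open>a + mhat m h \<le> n\<close> \<open>B \<subseteq> {1..n}\<close> kept this]
  show ?thesis by simp
qed

theorem proposition2:
  fixes nr nd nc k n :: nat and m :: "nat \<Rightarrow> nat" and x :: "nat \<Rightarrow> nat \<Rightarrow> real"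
    and phi :: "real \<Rightarrow> real" and F :: "nat \<Rightarrow> real"
  assumes nc_pos: "nc \<ge> 1"
    and m_pos: "\<forall>h\<in>{1..nc}. m h > 0"
    and n_def: "n = nr + nd + mhat m nc"
    and onehot: "\<forall>i\<in>{1..k}. \<forall>h\<in>{1..nc}.
        (\<forall>j\<in>{mhat m (h - 1) + 1..mhat m h}. x i (nr + nd + j) \<in> {0, 1}) \<and>
        (\<Sum>j=mhat m (h - 1) + 1..mhat m h. x i (nr + nd + j)) = 1"
    and solv: "saddle_solvable k (\<lambda>i l. phi (eucl_dist n (x i) (x l))) (Pmat n x) {1..n+1} F"
  shows "saddle_solvable k (\<lambda>i l. phi (eucl_dist n (x i) (x l))) (Pmat n x)
           ({1..n+1} - {nr + nd + mhat m h | h. h \<in> {1..nc}}) F"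
proof -
  define D where "D = {nr + nd + mhat m h | h. h \<in> {1..nc}}"
  have D_sub: "D \<subseteq> {1..n + 1}"
  proof
    fix d assume "d \<in> D"
    then obtain h where "h \<in> {1..nc}" and "d = nr + nd + mhat m h" unfolding D_def by blast
    then show "d \<in> {1..n + 1}"
      using mhat_pred_less[of h m] m_pos mhat_mono[of h nc m] unfolding n_def by auto
  qed
  have dependent: "\<forall>d\<in>D. \<exists>w. \<forall>i\<in>{1..k}. Pmat n x i d = (\<Sum>c\<in>{1..n + 1} - D. Pmat n x i c * w c)"
  proof
    fix d assume "d \<in> D"
    then obtain h where h: "h \<in> {1..nc}" and d: "d = nr + nd + mhat m h"
      unfolding D_def by blast
    have "m h > 0" using m_pos h by blast
    moreover have "nr + nd + mhat m nc \<le> n" using n_def by simp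
    moreover have "\<forall>i\<in>{1..k}. (\<Sum>j=mhat m (h - 1) + 1..mhat m h. x i (nr + nd + j)) = 1"
      using onehot h by blast
    ultimately show "\<exists>w. \<forall>i\<in>{1..k}. Pmat n x i d = (\<Sum>c\<in>{1..n + 1} - D. Pmat n x i c * w c)"
      unfolding d D_def by (rule onehot_last_column_dependent[OF h])
  qed
  show ?thesis
    unfolding D_def[symmetric]
    by (rule saddle_solvable_drop_dependent_columns[OF _ D_sub dependent solv]) simp
qed

end
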